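(* Let $q\in\mathbb{C}\setminus\{0,1\}$ with a fixed square root $q^{1/2}$, and let $r\in\mathbb{C}$. For all integers $m,n\ge 0$, $$D_{q,x}\,H_{m,n}(x,y;q,r)=\frac{2q^{-\frac{m-1}{2}}(1-q^m)}{1-q}\,H_{m-1,n}(x,y;q,q^{1/2}r),\qquad D_{q,y}\,H_{m,n}(x,y;q,r)=\frac{2q^{-\frac{n-1}{2}}(1-q^n)}{1-q}\,H_{m,n-1}(x,y;q,q^{1/2}r),$$ with the convention $H_{-1,n}=H_{m,-1}=0$.
   Context: The continuous $q$-Hermite polynomials $H_n(x;q)\in\mathbb{C}[x]$ are defined by $H_{-1}=0$, $H_0=1$, $H_{n+1}(x;q)=2xH_n(x;q)-(1-q^n)H_{n-1}(x;q)$. The bivariate continuous $q$-Hermite polynomials $H_{m,n}(x,y;q,r)\in\mathbb{C}[x,y]$ are defined by $H_{-1,n}=H_{m,-1}=0$, $H_{0,n}(x,y;q,r)=H_n(y;q)$ and, for $m,n\ge 0$, $H_{m+1,n}=2xH_{m,n}-(1-q^m)H_{m-1,n}-q^m(1-q^n)rH_{m,n-1}$ (all evaluated at $(x,y;q,r)$). The Askey–Wilson type operator $D_q$ on polynomials $f(x)$ is defined by writing $x=\tfrac12(z+z^{-1})$ and setting $$D_qf(x)=\frac{f\big(\tfrac12(q^{1/2}z+q^{-1/2}z^{-1})\big)-f\big(\tfrac12(q^{-1/2}z+q^{1/2}z^{-1})\big)}{\tfrac12(q^{1/2}-q^{-1/2})(z-z^{-1})},$$ which is again a polynomial in $x$;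 $D_{q,x}$ and $D_{q,y}$ denote this operator acting in the variable $x$, resp. $y$, of a bivariate polynomial. *)

theory Defs
  imports Complex_Main
begin

text \<open>Continuous q-Hermite polynomials, evaluated at x (H_{-1} = 0 built in).\<close>
fun qHermite :: "nat \<Rightarrow> complex \<Rightarrow> complex \<Rightarrow> complex" where
  "qHermite 0 x q = 1"
| "qHermite (Suc 0) x q = 2 * x"
| "qHermite (Suc (Suc n)) x q =
     2 * x * qHermite (Suc n) x q - (1 - q ^ Suc n) * qHermite n x q"

fun biHermite_nat :: "nat \<Rightarrow> nat \<Rightarrow> complex \<Rightarrow> complex \<Rightarrow> complex \<Rightarrow> complex \<Rightarrow> complex" where
  "biHermite_nat 0 n x y q r = qHermite n y q"
| "biHermite_nat (Suc m) n x y q r =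
     2 * x * biHermite_nat m n x y q r
     - (1 - q ^ m) * (if m = 0 then 0 else biHermite_nat (m - 1) n x y q r)
     - q ^ m * (1 - q ^ n) * r * (if n = 0 then 0 else biHermite_nat m (n - 1) x y q r)"

definition biHermite :: "int \<Rightarrow> int \<Rightarrow> complex \<Rightarrow> complex \<Rightarrow> complex \<Rightarrow> complex \<Rightarrow> complex" where
  "biHermite m n x y q r =
     (if m < 0 \<or> n < 0 then 0 else biHermite_nat (nat m) (nat n) x y q r)"

text \<open>The Askey--Wilson type operator D_q applied to f, evaluated at x = (z + 1/z)/2,
  where s is the fixed square root q^{1/2}. Meaningful for z \<noteq> 0, z \<noteq> z^{-1}.\<close>
definition joukowski :: "complex \<Rightarrow> complex" where
  "joukowski z = (z + inverse z) / 2"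

definition AW_D :: "complex \<Rightarrow> (complex \<Rightarrow> complex) \<Rightarrow> complex \<Rightarrow> complex" where
  "AW_D s f z =
     (f (joukowski (s * z)) - f (joukowski (z / s)))
     / ((s - inverse s) * (z - inverse z) / 2)"

end

theory Submission
  imports Defs
begin

text \<open>Put x = (z + 1/z)/2. The recurrence of the q-Hermite polynomials yields the shift formula
  s^n H_n((sz + 1/(sz))/2) = H_n(x) + (q^n - 1) z H_{n-1}(x); subtracting its image under
  z \<mapsto> 1/z gives the divided difference of H_n. The recurrence of H_{m,n} in m has coefficients
  independent of y, so the y-difference of H_{m,n} follows by induction on m; the extra factor s
  picked up when passing from s^n to s^{n-1} is absorbed into r, which is why the parameter becomes
  s r. The x-part follows from the symmetry H_{m,n}(x,y) = H_{n,m}(y,x), i.e. from the analogous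
  recurrence in n.\<close>

lemma qHermite_Suc:
  "qHermite (Suc n) x q = 2 * x * qHermite n x q - (1 - q ^ n) * qHermite (n - 1) x q"
  by (cases n) simp_all

lemma biHermite_nat_Suc_left:
  "biHermite_nat (Suc m) n x y q r =
     2 * x * biHermite_nat m n x y q r - (1 - q ^ m) * biHermite_nat (m - 1) n x y q r
     - q ^ m * (1 - q ^ n) * r * biHermite_nat m (n - 1) x y q r"
  by simp

text \<open>The guards of the defining equation are redundant: each guarded term carries the factor
  1 - q^0 = 0, so the truncated subtraction 0 - 1 = 0 is harmless. The same holds for all
  recurrences below.\<close>
declare biHermite_nat.simps(2) [simp del]

lemma biHermite_nat_0_right: "biHermite_nat m 0 x y q r = qHermite m x q"
proof (induction m rule: induct_nat_012)
  case (ge2 n)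
  then show ?case by (simp add: biHermite_nat_Suc_left)
qed (simp_all add: biHermite_nat_Suc_left)

lemma one_minus_power_mult_power_pred:
  "(1 - a ^ k) * b ^ k = (1 - a ^ k) * (b * b ^ (k - 1))" for a b :: "'a::comm_ring_1"
  by (cases k) simp_all

lemma one_minus_power_mult_biHermite_nat:
  "(1 - q ^ m) * biHermite_nat m n x y q r =
     (1 - q ^ m) * (2 * x * biHermite_nat (m - 1) n x y q r
       - (1 - q ^ (m - 1)) * biHermite_nat (m - 2) n x y q r
       - q ^ (m - 1) * (1 - q ^ n) * r * biHermite_nat (m - 1) (n - 1) x y q r)"
  by (cases m) (simp_all add: biHermite_nat_Suc_left)

text \<open>Read a = q^k, b = q^n, c = q^{k-1}, d = q^{n-1}, R = H_{k,n}, A = H_{k+1,n+1}, etc. The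
  recurrences one step down hold only for positive indices, hence enter multiplied by 1 - a, 1 - b.\<close>
lemma biHermite_recurrence_swap_step:
  fixes x y q r a c b d A P Q R S T U V W Xa Xb :: "'a::idom"
  assumes "A = 2*x*P - (1 - a)*Q - a*(1 - q*b)*r*R"
    and "P = 2*y*R - (1 - b)*S - b*(1 - a)*r*T"
    and "Q = 2*y*T - (1 - b)*U - b*(1 - c)*r*Xa"
    and "V = 2*x*R - (1 - a)*T - a*(1 - b)*r*S"
    and "W = 2*x*S - (1 - a)*U - a*(1 - d)*r*Xb"
    and "(1 - a) * R = (1 - a) * (2*x*T - (1 - c)*Xa - c*(1 - b)*r*U)"
    and "(1 - b) * R = (1 - b) * (2*y*S - (1 - d)*Xb - d*(1 - a)*r*U)"
    and "(1 - a) * a = (1 - a) * (q * c)"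
    and "(1 - b) * b = (1 - b) * (q * d)"
  shows "A = 2*y*V - (1 - b)*W - b*(1 - q*a)*r*R"
  using assms by algebra

lemma biHermite_nat_Suc_right:
  "biHermite_nat m (Suc n) x y q r =
     2 * y * biHermite_nat m n x y q r - (1 - q ^ n) * biHermite_nat m (n - 1) x y q r
     - q ^ n * (1 - q ^ m) * r * biHermite_nat (m - 1) n x y q r"
proof (induction m arbitrary: n rule: less_induct)
  case (less m)
  let ?B = "\<lambda>i j. biHermite_nat i j x y q r"
  show ?case
  proof (cases m)
    case 0
    then show ?thesis by (simp add: qHermite_Suc)
  next
    case (Suc k)
    have pred_right: "(1 - q ^ n) * ?B k n = (1 - q ^ n) * (2 * y * ?B k (n - 1)
        - (1 - q ^ (n - 1)) * ?B k (n - 2) - q ^ (n - 1) * (1 - q ^ k) * r * ?B (k - 1) (n - 1))"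
      by (cases n) (simp_all add: less.IH Suc)
    have "?B (Suc k) (Suc n) = 2 * y * ?B (Suc k) n - (1 - q ^ n) * ?B (Suc k) (n - 1)
        - q ^ n * (1 - q * q ^ k) * r * ?B k n"
      by (rule biHermite_recurrence_swap_step[where x = x and y = y
            and P = "?B k (Suc n)" and Q = "?B (k - 1) (Suc n)" and T = "?B (k - 1) n"
            and S = "?B k (n - 1)" and U = "?B (k - 1) (n - 1)" and Xa = "?B (k - 2) n"
            and Xb = "?B k (n - 2)" and c = "q ^ (k - 1)" and d = "q ^ (n - 1)"])
        (simp_all add: biHermite_nat_Suc_left less.IH Suc pred_right one_minus_power_mult_biHermite_nat
          one_minus_power_mult_power_pred numeral_2_eq_2)
    then show ?thesis using Suc by simp
  qed
qed

lemma biHermite_nat_swap: "biHermite_nat m n x y q r = biHermite_nat n m y x q r"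
proof (induction m arbitrary: n rule: less_induct)
  case (less m)
  show ?case
  proof (cases m)
    case 0
    then show ?thesis by (simp add: biHermite_nat_0_right)
  next
    case (Suc k)
    then show ?thesis
      using less.IH[of k n] less.IH[of "k - 1" n] less.IH[of k "n - 1"]
      by (simp add: biHermite_nat_Suc_left biHermite_nat_Suc_right mult_ac)
  qed
qed

lemma joukowski_inverse: "joukowski (inverse z) = joukowski z"
  by (simp add: joukowski_def add.commute)

text \<open>Both sides of the shift formula obey P_{k+1} = (qz + 1/z) P_k - q (1 - q^k) P_{k-1}.\<close>
lemma qHermite_shift_step:
  fixes z z' e q Q H H' H'' :: "'a::idom"
  assumes "z * z' = 1" and "e = z + z'"
    and "H'' = e * H' - (1 - q * Q) * H" and "H' = e * H - (1 - Q) * H\<^sub>0"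
  shows "(q * z + z') * (H' + (q * Q - 1) * z * H) - q * (1 - q * Q) * (H + (Q - 1) * z * H\<^sub>0)
    = H'' + (q * (q * Q) - 1) * z * H'"
  using assms by algebra

lemma qHermite_joukowski_mult:
  assumes "z \<noteq> 0" and "s \<noteq> 0" and "s ^ 2 = q"
  shows "s ^ n * qHermite n (joukowski (s * z)) q
    = qHermite n (joukowski z) q + (q ^ n - 1) * z * qHermite (n - 1) (joukowski z) q"
proof (induction n rule: induct_nat_012)
  case 0
  show ?case by simp
next
  case 1
  show ?case using assms by (simp add: joukowski_def field_simps power2_eq_square)
next
  case (ge2 n)
  let ?H = "\<lambda>k. qHermite k (joukowski z) q"
  have u: "s * (2 * joukowski (s * z)) = q * z + inverse z"
    using assms by (simp add: joukowski_def field_simps power2_eq_square)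
  have "s ^ Suc (Suc n) * qHermite (Suc (Suc n)) (joukowski (s * z)) q
      = s * (2 * joukowski (s * z)) * (s ^ Suc n * qHermite (Suc n) (joukowski (s * z)) q)
        - s ^ 2 * (1 - q * q ^ n) * (s ^ n * qHermite n (joukowski (s * z)) q)"
    by (simp add: algebra_simps power2_eq_square)
  also have "\<dots> = (q * z + inverse z) * (?H (Suc n) + (q * q ^ n - 1) * z * ?H n)
        - q * (1 - q * q ^ n) * (?H n + (q ^ n - 1) * z * ?H (n - 1))"
    using ge2 by (simp add: u assms(3))
  also have "\<dots> = ?H (Suc (Suc n)) + (q * (q * q ^ n) - 1) * z * ?H (Suc n)"
    by (rule qHermite_shift_step[where e = "2 * joukowski z"])
      (simp_all add: assms(1) qHermite_Suc joukowski_def)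
  finally show ?case by simp
qed

lemma qHermite_joukowski_diff:
  assumes "z \<noteq> 0" and "s \<noteq> 0" and "s ^ 2 = q"
  shows "s ^ n * (qHermite n (joukowski (s * z)) q - qHermite n (joukowski (z / s)) q)
    = (q ^ n - 1) * (z - inverse z) * qHermite (n - 1) (joukowski z) q"
proof -
  have "joukowski (z / s) = joukowski (s * inverse z)"
    using assms(1,2) by (simp add: joukowski_def field_simps)
  then have "s ^ n * qHermite n (joukowski (z / s)) q
      = qHermite n (joukowski z) q + (q ^ n - 1) * inverse z * qHermite (n - 1) (joukowski z) q"
    using qHermite_joukowski_mult[of "inverse z", OF _ assms(2,3)] assms(1)
    by (simp add: joukowski_inverse)
  then show ?thesis
    unfolding right_diff_distrib qHermite_joukowski_mult[OF assms] by (simp add: algebra_simps)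
qed

lemma biHermite_nat_joukowski_diff_right:
  assumes "z \<noteq> 0" and "s \<noteq> 0" and "s ^ 2 = q"
  shows "s ^ n * (biHermite_nat m n x (joukowski (s * z)) q r
      - biHermite_nat m n x (joukowski (z / s)) q r)
    = (q ^ n - 1) * (z - inverse z) * biHermite_nat m (n - 1) x (joukowski z) q (s * r)"
proof (induction m arbitrary: n rule: less_induct)
  case (less m)
  let ?\<Delta> = "\<lambda>i j. biHermite_nat i j x (joukowski (s * z)) q r
    - biHermite_nat i j x (joukowski (z / s)) q r"
  let ?B = "\<lambda>i j. biHermite_nat i j x (joukowski z) q (s * r)"
  show ?case
  proof (cases m)
    case 0
    then show ?thesis by (simp add: qHermite_joukowski_diff[OF assms])
  next
    case (Suc k)
    have smaller: "k < m" "k - 1 < m"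
      using Suc by simp_all
    have "s ^ n * ?\<Delta> (Suc k) n
        = 2 * x * (s ^ n * ?\<Delta> k n) - (1 - q ^ k) * (s ^ n * ?\<Delta> (k - 1) n)
        - q ^ k * r * ((1 - q ^ n) * s ^ n * ?\<Delta> k (n - 1))"
      by (simp add: biHermite_nat_Suc_left algebra_simps)
    also have "\<dots> = 2 * x * (s ^ n * ?\<Delta> k n) - (1 - q ^ k) * (s ^ n * ?\<Delta> (k - 1) n)
        - q ^ k * r * s * (1 - q ^ n) * (s ^ (n - 1) * ?\<Delta> k (n - 1))"
      unfolding one_minus_power_mult_power_pred[of q n s] by (simp only: mult_ac)
    also have "\<dots> = (q ^ n - 1) * (z - inverse z)
        * (2 * x * ?B k (n - 1) - (1 - q ^ k) * ?B (k - 1) (n - 1)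
        - q ^ k * (1 - q ^ (n - 1)) * (s * r) * ?B k (n - 1 - 1))"
      unfolding less.IH[OF smaller(1)] less.IH[OF smaller(2)] by (simp add: algebra_simps)
    also have "\<dots> = (q ^ n - 1) * (z - inverse z) * ?B (Suc k) (n - 1)"
      by (simp add: biHermite_nat_Suc_left)
    finally show ?thesis using Suc by simp
  qed
qed

lemma biHermite_nat_joukowski_diff_left:
  assumes "z \<noteq> 0" and "s \<noteq> 0" and "s ^ 2 = q"
  shows "s ^ m * (biHermite_nat m n (joukowski (s * z)) y q r
      - biHermite_nat m n (joukowski (z / s)) y q r)
    = (q ^ m - 1) * (z - inverse z) * biHermite_nat (m - 1) n (joukowski z) y q (s * r)"
  using biHermite_nat_joukowski_diff_right[OF assms, of m n y r]
  by (simp only: biHermite_nat_swap[of _ n])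

lemma biHermite_int_nat: "biHermite (int m) (int n) x y q r = biHermite_nat m n x y q r"
  by (simp add: biHermite_def)

lemma biHermite_pred_left:
  "biHermite (int m - 1) (int n) x y q r = (if m = 0 then 0 else biHermite_nat (m - 1) n x y q r)"
  by (simp add: biHermite_def nat_diff_distrib)

lemma biHermite_pred_right:
  "biHermite (int m) (int n - 1) x y q r = (if n = 0 then 0 else biHermite_nat m (n - 1) x y q r)"
  by (simp add: biHermite_def nat_diff_distrib)

lemma AW_D_eq_of_diff:
  assumes "z \<noteq> 0" and "z\<^sup>2 \<noteq> 1" and "q \<noteq> 0" and "q \<noteq> 1" and "s ^ 2 = q"
    and diff: "s ^ k * (f (joukowski (s * z)) - f (joukowski (z / s)))
      = (q ^ k - 1) * (z - inverse z) * X"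
  shows "AW_D s f z = 2 * s powi (1 - int k) * (1 - q ^ k) / (1 - q) * X"
proof -
  have "s \<noteq> 0"
    using assms(3,5) by auto
  have "z - inverse z \<noteq> 0"
    using assms(1,2) by (auto simp: field_simps power2_eq_square)
  have "f (joukowski (s * z)) - f (joukowski (z / s)) = (q ^ k - 1) * (z - inverse z) * X / s ^ k"
    using diff \<open>s \<noteq> 0\<close> by (simp add: field_simps)
  then have "AW_D s f z = 2 * (q ^ k - 1) / (s ^ k * (s - inverse s)) * X"
    using \<open>z - inverse z \<noteq> 0\<close> by (simp add: AW_D_def)
  also have "s ^ k * (s - inverse s) = s ^ k / s * (q - 1)"
    using \<open>s \<noteq> 0\<close> assms(5) by (simp add: field_simps power2_eq_square)
  also have "2 * (q ^ k - 1) / (s ^ k / s * (q - 1))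
      = 2 * s powi (1 - int k) * (1 - q ^ k) / (1 - q)"
    using \<open>s \<noteq> 0\<close> assms(4) by (simp add: power_int_diff field_simps)
  finally show ?thesis .
qed

theorem proposition3p5:
  fixes q s r :: complex and m n :: nat
  assumes "q \<noteq> 0" and "q \<noteq> 1" and "s ^ 2 = q"
  shows "(\<forall>z y. z \<noteq> 0 \<and> z\<^sup>2 \<noteq> 1 \<longrightarrow>
           AW_D s (\<lambda>x. biHermite (int m) (int n) x y q r) z
           = 2 * s powi (1 - int m) * (1 - q ^ m) / (1 - q)
             * biHermite (int m - 1) (int n) (joukowski z) y q (s * r)) \<and>
         (\<forall>z x. z \<noteq> 0 \<and> z\<^sup>2 \<noteq> 1 \<longrightarrow>
           AW_D s (\<lambda>y. biHermite (int m) (int n) x y q r) z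
           = 2 * s powi (1 - int n) * (1 - q ^ n) / (1 - q)
             * biHermite (int m) (int n - 1) x (joukowski z) q (s * r))"
proof -
  have "s \<noteq> 0"
    using assms(1,3) by auto
  show ?thesis
  proof (intro conjI allI impI)
    fix z y :: complex
    assume "z \<noteq> 0 \<and> z\<^sup>2 \<noteq> 1"
    then show "AW_D s (\<lambda>x. biHermite (int m) (int n) x y q r) z
        = 2 * s powi (1 - int m) * (1 - q ^ m) / (1 - q)
          * biHermite (int m - 1) (int n) (joukowski z) y q (s * r)"
      using biHermite_nat_joukowski_diff_left[OF _ \<open>s \<noteq> 0\<close> assms(3)]
      by (intro AW_D_eq_of_diff) (simp_all add: assms biHermite_int_nat biHermite_pred_left)
  next
    fix z x :: complex
    assume "z \<noteq> 0 \<and> z\<^sup>2 \<noteq> 1"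
    then show "AW_D s (\<lambda>y. biHermite (int m) (int n) x y q r) z
        = 2 * s powi (1 - int n) * (1 - q ^ n) / (1 - q)
          * biHermite (int m) (int n - 1) x (joukowski z) q (s * r)"
      using biHermite_nat_joukowski_diff_right[OF _ \<open>s \<noteq> 0\<close> assms(3)]
      by (intro AW_D_eq_of_diff) (simp_all add: assms biHermite_int_nat biHermite_pred_right)
  qed
qed

end
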